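(* Let $n\ge1$, let $\equiv$ be a lattice congruence of the weak order on $S_n$, and let $X$ be an equivalence class with minimum $\pi$ and maximum $\rho$. Then $p(\pi)$ and $p(\rho)$ are the minimum and maximum, respectively, of the equivalence class $p(X)=\{p(\sigma):\sigma\in X\}$ of the restriction $\equiv^*$.
   Context: $S_n$ is the set of permutations of $[n]$ with the weak order (inclusion of inversion sets), which is a lattice. A lattice congruence is an equivalence relation compatible with joins and meets; each of its classes is an interval of the weak order and so has a minimum and a maximum. $p(\sigma)\in S_{n-1}$ is obtained from $\sigma\in S_n$ by deleting $n$. The restriction is defined by $\alpha\equiv^*\beta$ iff $\alpha n\equiv\beta n$ (i.e., $n$ appended at the end); it is a lattice congruence on $S_{n-1}$, and $p(X)$ is one of its classes. *)

theory Defs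
  imports Main
begin

definition perms :: "nat \<Rightarrow> nat list set" where
  "perms n = {w. distinct w \<and> set w = {1..n}}"

definition inversions :: "nat list \<Rightarrow> (nat \<times> nat) set" where
  "inversions w = {(a,b). a < b \<and> (\<exists>i j. i < j \<and> j < length w \<and> w ! i = b \<and> w ! j = a)}"

definition weak_le :: "nat list \<Rightarrow> nat list \<Rightarrow> bool" where
  "weak_le x y \<longleftrightarrow> inversions x \<subseteq> inversions y"

definition weak_join :: "nat \<Rightarrow> nat list \<Rightarrow> nat list \<Rightarrow> nat list" where
  "weak_join n x y = (THE z. z \<in> perms n \<and> weak_le x z \<and> weak_le y z \<and>
      (\<forall>w\<in>perms n. weak_le x w \<and> weak_le y w \<longrightarrow> weak_le z w))"

definition weak_meet :: "nat \<Rightarrow> nat list \<Rightarrow> nat list \<Rightarrow> nat list" where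
  "weak_meet n x y = (THE z. z \<in> perms n \<and> weak_le z x \<and> weak_le z y \<and>
      (\<forall>w\<in>perms n. weak_le w x \<and> weak_le w y \<longrightarrow> weak_le w z))"

definition lattice_congruence :: "nat \<Rightarrow> (nat list \<times> nat list) set \<Rightarrow> bool" where
  "lattice_congruence n R \<longleftrightarrow> equiv (perms n) R \<and>
     (\<forall>x\<in>perms n. \<forall>y\<in>perms n. \<forall>z\<in>perms n. (x, y) \<in> R \<longrightarrow>
        (weak_join n x z, weak_join n y z) \<in> R \<and> (weak_meet n x z, weak_meet n y z) \<in> R)"

definition pdel :: "nat \<Rightarrow> nat list \<Rightarrow> nat list" where
  "pdel n w = removeAll n w"

definition restriction :: "nat \<Rightarrow> (nat list \<times> nat list) set \<Rightarrow> (nat list \<times> nat list) set" where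
  "restriction n R = {(a, b). a \<in> perms (n - 1) \<and> b \<in> perms (n - 1) \<and> (a @ [n], b @ [n]) \<in> R}"

definition is_min :: "nat list \<Rightarrow> nat list set \<Rightarrow> bool" where
  "is_min m A \<longleftrightarrow> m \<in> A \<and> (\<forall>s\<in>A. weak_le m s)"

definition is_max :: "nat list \<Rightarrow> nat list set \<Rightarrow> bool" where
  "is_max m A \<longleftrightarrow> m \<in> A \<and> (\<forall>s\<in>A. weak_le s m)"

end

theory Submission
  imports Defs "HOL-Library.Sublist"
begin

text \<open>Deleting a letter keeps exactly those inversions that avoid it, so \<open>p\<close> is monotone for
  the weak order and maps the minimum and maximum of \<open>X\<close> to the minimum and maximum of \<open>p(X)\<close>.\<close>

lemma ex_nth_pair_Cons_iff:
  "(\<exists>i j. i < j \<and> j < length (x # w) \<and> (x # w) ! i = b \<and> (x # w) ! j = a) \<longleftrightarrow>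
   (x = b \<and> (\<exists>j<length w. w ! j = a)) \<or> (\<exists>i j. i < j \<and> j < length w \<and> w ! i = b \<and> w ! j = a)"
  (is "?lhs \<longleftrightarrow> ?rhs")
proof
  assume ?lhs
  then obtain i j where "i < j" "j < length (x # w)" "(x # w) ! i = b" "(x # w) ! j = a"
    by blast
  then show ?rhs
    by (cases i; cases j) auto
next
  assume ?rhs
  then show ?lhs
  proof
    assume "x = b \<and> (\<exists>j<length w. w ! j = a)"
    then obtain j where "x = b" "j < length w" "w ! j = a" by blast
    then show ?lhs by (intro exI[of _ 0] exI[of _ "Suc j"]) simp
  next
    assume "\<exists>i j. i < j \<and> j < length w \<and> w ! i = b \<and> w ! j = a"
    then obtain i j where "i < j" "j < length w" "w ! i = b" "w ! j = a" by blast
    then show ?lhs by (intro exI[of _ "Suc i"] exI[of _ "Suc j"]) simp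
  qed
qed

lemma subseq_doubleton_conv_nth:
  "subseq [b, a] w \<longleftrightarrow> (\<exists>i j. i < j \<and> j < length w \<and> w ! i = b \<and> w ! j = a)"
proof (induction w)
  case (Cons x w)
  have "subseq [b, a] (x # w) \<longleftrightarrow> (x = b \<and> a \<in> set w) \<or> subseq [b, a] w"
    by (auto simp: subseq_singleton_left dest: subseq_Cons')
  then show ?case
    unfolding ex_nth_pair_Cons_iff Cons.IH in_set_conv_nth by blast
qed simp

lemma subseq_doubleton_filter_iff:
  "subseq [b, a] (filter P w) \<longleftrightarrow> subseq [b, a] w \<and> P a \<and> P b"
proof
  assume sub: "subseq [b, a] (filter P w)"
  then have "subseq [b, a] w"
    using subseq_filter_left subseq_order.order_trans by blast
  moreover have "P a \<and> P b"
    using list_emb_set[OF sub] by auto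
  ultimately show "subseq [b, a] w \<and> P a \<and> P b" ..
next
  assume "subseq [b, a] w \<and> P a \<and> P b"
  then show "subseq [b, a] (filter P w)"
    using subseq_filter[of "[b, a]" w P] by auto
qed

lemma inversions_conv_subseq: "inversions w = {(a, b). a < b \<and> subseq [b, a] w}"
  unfolding inversions_def subseq_doubleton_conv_nth ..

lemma inversions_filter:
  "inversions (filter P w) = {(a, b) \<in> inversions w. P a \<and> P b}"
  unfolding inversions_conv_subseq subseq_doubleton_filter_iff by auto

lemma weak_le_filter: "weak_le x y \<Longrightarrow> weak_le (filter P x) (filter P y)"
  unfolding weak_le_def inversions_filter by auto

lemma weak_le_pdel: "weak_le x y \<Longrightarrow> weak_le (pdel n x) (pdel n y)"
  unfolding pdel_def removeAll_filter_not_eq by (rule weak_le_filter)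

lemma is_min_pdel_image: "is_min m X \<Longrightarrow> is_min (pdel n m) (pdel n ` X)"
  unfolding is_min_def by (auto intro: weak_le_pdel)

lemma is_max_pdel_image: "is_max m X \<Longrightarrow> is_max (pdel n m) (pdel n ` X)"
  unfolding is_max_def by (auto intro: weak_le_pdel)

theorem mainTheorem6:
  fixes n :: nat and R :: "(nat list \<times> nat list) set" and X :: "nat list set"
    and \<pi> \<rho> :: "nat list"
  assumes "n \<ge> 1"
    and "lattice_congruence n R"
    and "X \<in> perms n // R"
    and "is_min \<pi> X" and "is_max \<rho> X"
  shows "is_min (pdel n \<pi>) (pdel n ` X) \<and> is_max (pdel n \<rho>) (pdel n ` X)"
  using is_min_pdel_image[OF assms(4)] is_max_pdel_image[OF assms(5)] ..

end
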